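(* Let $X$ be a Dedekind complete Riesz space with weak order unit $e$ and $T$ a conditional expectation with $Te=e$. For a net $(x_{\alpha})_{\alpha\in A}$ in $X$ and $x\in X$, the following are equivalent: (i) $x_{\alpha}\to x$ in $T$-conditional probability; (ii) $T(|x_{\alpha}-x|\wedge u)\xrightarrow{o}0$ for every $u\in X_{+}$; (iii) $T(|x_{\alpha}-x|\wedge e)\xrightarrow{o}0$.
   Context: A conditional expectation operator on $X$ is a strictly positive, order continuous linear projection $T$ with $Te=e$ whose range is a Dedekind complete Riesz subspace. $\xrightarrow{o}$ denotes order convergence: $y_\alpha\xrightarrow{o}y$ if there is a net $z_\beta\downarrow0$ such that for every $\beta$ there is $\alpha_0$ with $|y_\alpha-y|\le z_\beta$ for all $\alpha\ge\alpha_0$. $x_\alpha\to x$ in $T$-conditional probability means $TP_{(|x_\alpha-x|-\epsilon e)^{+}}e\xrightarrow{o}0$ for every $\epsilon>0$, where $P_y$ is the band projection onto the band generated by $y$. *)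

theory Defs
  imports Complex_Main
begin

text \<open>A Dedekind complete Riesz space is modelled by a type of sort
  {ordered_real_vector, conditionally_complete_lattice}: an ordered real vector
  space whose order is a lattice (hence a Riesz space) in which every nonempty
  set bounded above has a supremum.\<close>

definition rabs :: "'a::{ordered_real_vector,lattice} \<Rightarrow> 'a" where
  "rabs x = sup x (- x)"

definition rpos :: "'a::{ordered_real_vector,lattice} \<Rightarrow> 'a" where
  "rpos x = sup x 0"

definition disj_compl :: "'a::{ordered_real_vector,lattice} set \<Rightarrow> 'a set" where
  "disj_compl S = {x. \<forall>s\<in>S. inf (rabs x) (rabs s) = 0}"

definition riesz_ideal :: "'a::{ordered_real_vector,lattice} set \<Rightarrow> bool" where
  "riesz_ideal S \<longleftrightarrow> subspace S \<and> (\<forall>x y. y \<in> S \<and> rabs x \<le> rabs y \<longrightarrow> x \<in> S)"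

definition band :: "'a::{ordered_real_vector,conditionally_complete_lattice} set \<Rightarrow> bool" where
  "band S \<longleftrightarrow> riesz_ideal S \<and> (\<forall>D. D \<subseteq> S \<and> D \<noteq> {} \<and> bdd_above D \<longrightarrow> Sup D \<in> S)"

definition band_gen :: "'a::{ordered_real_vector,conditionally_complete_lattice} \<Rightarrow> 'a set" where
  "band_gen y = \<Inter> {B. band B \<and> y \<in> B}"

text \<open>P_y: the band projection onto the band generated by y
  (X = B \<oplus> B^d in a Dedekind complete space).\<close>
definition band_proj :: "'a::{ordered_real_vector,conditionally_complete_lattice} \<Rightarrow> 'a \<Rightarrow> 'a" where
  "band_proj y x = (THE b. b \<in> band_gen y \<and> x - b \<in> disj_compl (band_gen y))"

definition weak_order_unit :: "'a::{ordered_real_vector,conditionally_complete_lattice} \<Rightarrow> bool" where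
  "weak_order_unit e \<longleftrightarrow> 0 \<le> e \<and> band_gen e = UNIV"

definition down_directed :: "'a::order set \<Rightarrow> bool" where
  "down_directed D \<longleftrightarrow> (\<forall>a\<in>D. \<forall>b\<in>D. \<exists>c\<in>D. c \<le> a \<and> c \<le> b)"

text \<open>Nets: index type of class preorder, assumed directed where used.\<close>
definition directed_index :: "'i::preorder itself \<Rightarrow> bool" where
  "directed_index _ \<longleftrightarrow> (\<forall>a b::'i. \<exists>c. a \<le> c \<and> b \<le> c)"

text \<open>Order convergence of a net: there is a net z_beta decreasing to 0
  (taken, w.l.o.g., as a downward directed set D with infimum 0 indexed by itself)
  such that for every beta, eventually |y_alpha - y| <= z_beta.\<close>
definition oconv :: "('i::preorder \<Rightarrow> 'a::{ordered_real_vector,conditionally_complete_lattice}) \<Rightarrow> 'a \<Rightarrow> bool" where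
  "oconv y l \<longleftrightarrow> (\<exists>D. D \<noteq> {} \<and> down_directed D \<and> (\<forall>z\<in>D. 0 \<le> z) \<and> Inf D = 0 \<and>
      (\<forall>z\<in>D. \<exists>a0. \<forall>a. a0 \<le> a \<longrightarrow> rabs (y a - l) \<le> z))"

definition order_continuous :: "('a::{ordered_real_vector,conditionally_complete_lattice} \<Rightarrow> 'a) \<Rightarrow> bool" where
  "order_continuous T \<longleftrightarrow> (\<forall>D. D \<noteq> {} \<and> down_directed D \<and> (\<forall>z\<in>D. 0 \<le> z) \<and> Inf D = 0
      \<longrightarrow> Inf (T ` D) = 0)"

definition strictly_positive :: "('a::{ordered_real_vector,lattice} \<Rightarrow> 'a) \<Rightarrow> bool" where
  "strictly_positive T \<longleftrightarrow> (\<forall>x. 0 \<le> x \<longrightarrow> 0 \<le> T x) \<and> (\<forall>x. 0 < x \<longrightarrow> 0 < T x)"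

definition riesz_subspace :: "'a::{ordered_real_vector,lattice} set \<Rightarrow> bool" where
  "riesz_subspace S \<longleftrightarrow> subspace S \<and> (\<forall>x\<in>S. \<forall>y\<in>S. sup x y \<in> S \<and> inf x y \<in> S)"

definition dedekind_complete_subset :: "'a::order set \<Rightarrow> bool" where
  "dedekind_complete_subset S \<longleftrightarrow> (\<forall>D. D \<subseteq> S \<and> D \<noteq> {} \<and> (\<exists>u\<in>S. \<forall>d\<in>D. d \<le> u) \<longrightarrow>
      (\<exists>s\<in>S. (\<forall>d\<in>D. d \<le> s) \<and> (\<forall>u\<in>S. (\<forall>d\<in>D. d \<le> u) \<longrightarrow> s \<le> u)))"

definition cond_exp_op :: "('a::{ordered_real_vector,conditionally_complete_lattice} \<Rightarrow> 'a) \<Rightarrow> 'a \<Rightarrow> bool" where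
  "cond_exp_op T e \<longleftrightarrow> linear T \<and> (\<forall>x. T (T x) = T x) \<and> strictly_positive T \<and>
      order_continuous T \<and> T e = e \<and> riesz_subspace (range T) \<and> dedekind_complete_subset (range T)"

end

theory Submission
  imports Defs "HOL-Library.Lattice_Algebras"
begin

(* Put y = |x_\<alpha> - x|. In a Dedekind complete space the band projection of e onto the band
   generated by w \<ge> 0 is P_w e = sup_n (n w \<and> e). For w = (y - \<epsilon> e)\<^sup>+ this gives
   P_w e \<le> max 1 (1/\<epsilon>) (y \<and> e) and y \<and> e \<le> \<epsilon> e + P_w e, while for u \<ge> 0 one has
   y \<and> u \<le> max n 1 (y \<and> e) + (u - n e)\<^sup>+, where (u - n e)\<^sup>+ decreases to 0 because e is a
   weak order unit. After applying the positive order continuous operator T, each implication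
   is an instance of one domination principle: if |f_\<alpha>| \<le> c_k |g_k,\<alpha>| + t_k, where every
   net g_k converges to 0 in order and inf_k t_k = 0, then f converges to 0 in order. *)

section \<open>Riesz space arithmetic\<close>

interpretation riesz:
  lattice_ab_group_add "(+)" "0::'a::{ordered_real_vector,lattice}" "(-)" uminus "(\<le>)" "(<)" inf sup
  by unfold_locales

lemma scaleR_inf_distrib:
  fixes a b :: "'a::{ordered_real_vector,lattice}"
  assumes "0 \<le> c"
  shows "c *\<^sub>R inf a b = inf (c *\<^sub>R a) (c *\<^sub>R b)"
proof (cases "c = 0")
  case False
  with assms have c: "0 < c" by simp
  have "inf (c *\<^sub>R a) (c *\<^sub>R b) /\<^sub>R c \<le> inf a b"
    using c by (simp add: pos_divideR_le_eq)
  then have "inf (c *\<^sub>R a) (c *\<^sub>R b) \<le> c *\<^sub>R inf a b"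
    by (simp only: pos_divideR_le_eq[OF c])
  with assms show ?thesis by (simp add: antisym scaleR_left_mono)
qed simp

lemma scaleR_sup_distrib:
  fixes a b :: "'a::{ordered_real_vector,lattice}"
  assumes "0 \<le> c"
  shows "c *\<^sub>R sup a b = sup (c *\<^sub>R a) (c *\<^sub>R b)"
proof (cases "c = 0")
  case False
  with assms have c: "0 < c" by simp
  have "sup a b \<le> sup (c *\<^sub>R a) (c *\<^sub>R b) /\<^sub>R c"
    using c by (simp add: pos_le_divideR_eq)
  then have "c *\<^sub>R sup a b \<le> sup (c *\<^sub>R a) (c *\<^sub>R b)"
    by (simp only: pos_le_divideR_eq[OF c])
  with assms show ?thesis by (simp add: antisym scaleR_left_mono)
qed simp

lemma rabs_nonneg: "0 \<le> rabs (x::'a::{ordered_real_vector,lattice})"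
proof -
  have "x + - x \<le> rabs x + rabs x"
    unfolding rabs_def by (intro add_mono) simp_all
  then show ?thesis by simp
qed

lemma rabs_of_nonneg: "0 \<le> (x::'a::{ordered_real_vector,lattice}) \<Longrightarrow> rabs x = x"
  by (simp add: rabs_def sup.absorb1 riesz.minus_le_self_iff)

lemma le_rabs: "(x::'a::{ordered_real_vector,lattice}) \<le> rabs x" "- x \<le> rabs x"
  unfolding rabs_def by simp_all

lemma rabs_eq_zeroD: "rabs (x::'a::{ordered_real_vector,lattice}) = 0 \<Longrightarrow> x = 0"
  unfolding rabs_def by (rule riesz.sup_0_imp_0)

lemma rabs_uminus: "rabs (- (x::'a::{ordered_real_vector,lattice})) = rabs x"
  unfolding rabs_def by (simp add: sup_commute)

lemma rabs_triangle: "rabs ((x::'a::{ordered_real_vector,lattice}) + y) \<le> rabs x + rabs y"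
  unfolding rabs_def[of "x + y"] using add_mono[OF le_rabs(1) le_rabs(1), of x y]
    add_mono[OF le_rabs(2) le_rabs(2), of x y] by simp

lemma rabs_scaleR: "rabs (c *\<^sub>R (x::'a::{ordered_real_vector,lattice})) = \<bar>c\<bar> *\<^sub>R rabs x"
proof (cases "0 \<le> c")
  case True
  then show ?thesis by (simp add: rabs_def scaleR_sup_distrib)
next
  case False
  then have "c *\<^sub>R x = \<bar>c\<bar> *\<^sub>R - x" "- (c *\<^sub>R x) = \<bar>c\<bar> *\<^sub>R x" by simp_all
  then show ?thesis
    by (simp only: rabs_def scaleR_sup_distrib[OF abs_ge_zero] sup_commute)
qed

lemma rpos_nonneg: "0 \<le> rpos (x::'a::{ordered_real_vector,lattice})"
  unfolding rpos_def by simp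

lemma le_rpos: "(x::'a::{ordered_real_vector,lattice}) \<le> rpos x"
  unfolding rpos_def by simp

lemma rpos_mono: "(x::'a::{ordered_real_vector,lattice}) \<le> y \<Longrightarrow> rpos x \<le> rpos y"
  unfolding rpos_def by (rule sup_mono) simp_all

lemma rpos_le_rabs: "rpos (x::'a::{ordered_real_vector,lattice}) \<le> rabs x"
  unfolding rpos_def using le_rabs(1)[of x] rabs_nonneg[of x] by simp

lemma rabs_le_rpos_add_rpos_uminus:
  "rabs (x::'a::{ordered_real_vector,lattice}) \<le> rpos x + rpos (- x)"
  unfolding rabs_def using add_mono[OF le_rpos[of x] rpos_nonneg[of "- x"]]
    add_mono[OF rpos_nonneg[of x] le_rpos[of "- x"]] by simp

lemma diff_inf_eq_rpos: "(b::'a::{ordered_real_vector,lattice}) - inf a b = rpos (b - a)"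
  by (simp add: rpos_def riesz.diff_inf_eq_sup riesz.add_sup_distrib_left)

lemma inf_rpos_rpos_uminus: "inf (rpos (x::'a::{ordered_real_vector,lattice})) (rpos (- x)) = 0"
proof -
  have "rpos (- x) = rpos x + - x"
    unfolding rpos_def riesz.add_sup_distrib_right by (simp add: sup_commute)
  then have "inf (rpos x) (rpos (- x)) = rpos x + inf 0 (- x)"
    by (simp add: riesz.add_inf_distrib_left)
  also have "inf 0 (- x) = - rpos x"
    by (simp add: rpos_def riesz.neg_sup_eq_inf inf_commute)
  finally show ?thesis by simp
qed

lemma inf_add_le:
  fixes p q r :: "'a::{ordered_real_vector,lattice}"
  assumes "0 \<le> p" "0 \<le> q" "0 \<le> r"
  shows "inf p (q + r) \<le> inf p q + inf p r"
proof -
  have "inf p (q + r) \<le> inf (p + r) (q + r)"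
    using assms by (intro inf_mono) (simp_all add: add_increasing2)
  also have "\<dots> = inf p q + r" by (simp add: riesz.add_inf_distrib_right)
  finally have "inf p (q + r) \<le> inf (inf p q + r) (inf p q + p)"
    using assms by (simp add: le_infI1 add_increasing)
  also have "\<dots> = inf p q + inf p r" by (simp add: riesz.add_inf_distrib_left inf_commute)
  finally show ?thesis .
qed

lemma inf_scaleR_le:
  fixes a v :: "'a::{ordered_real_vector,lattice}"
  assumes "0 \<le> t" "0 \<le> a" "0 \<le> v"
  shows "inf (t *\<^sub>R a) v \<le> max t 1 *\<^sub>R inf a v"
proof -
  have "inf (t *\<^sub>R a) v \<le> inf (max t 1 *\<^sub>R a) (max t 1 *\<^sub>R v)"
    using assms scaleR_right_mono[of 1 "max t 1" v]
    by (intro inf_mono scaleR_right_mono) simp_all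
  also have "\<dots> = max t 1 *\<^sub>R inf a v" by (simp add: scaleR_inf_distrib)
  finally show ?thesis .
qed

lemma inf_eq_zero_mono:
  fixes p q v :: "'a::{ordered_real_vector,lattice}"
  assumes "0 \<le> p" "p \<le> q" "0 \<le> v" "inf q v = 0"
  shows "inf p v = 0"
  using inf_mono[OF assms(2) order_refl, of v] assms by (simp add: antisym)

lemma inf_scaleR_rpos_diff_le:
  fixes a b :: "'a::{ordered_real_vector,lattice}"
  assumes "0 \<le> a" "0 \<le> b" "0 \<le> t"
  shows "inf (t *\<^sub>R rpos (a - b)) b \<le> a"
proof -
  let ?w = "t *\<^sub>R rpos (a - b)"
  have "inf ?w (rpos (b - a)) \<le> max t 1 *\<^sub>R inf (rpos (a - b)) (rpos (b - a))"
    using assms by (intro inf_scaleR_le rpos_nonneg)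
  also have "\<dots> = 0" using inf_rpos_rpos_uminus[of "a - b"] by simp
  finally have disj: "inf ?w (rpos (b - a)) \<le> 0" .
  have "inf a b + rpos (b - a) = b" by (metis add.commute diff_add_cancel diff_inf_eq_rpos)
  then have "inf ?w b = inf ?w (inf a b + rpos (b - a))" by simp
  also have "\<dots> \<le> inf ?w (inf a b) + inf ?w (rpos (b - a))"
    using assms by (intro inf_add_le scaleR_nonneg_nonneg rpos_nonneg) simp_all
  also have "\<dots> \<le> a + 0"
    by (rule add_mono[OF le_infI2[OF inf_le1] disj])
  finally show ?thesis by simp
qed

lemma le_zero_if_multiples_le:
  fixes m e :: "'a::{ordered_real_vector,conditionally_complete_lattice}"
  assumes "\<And>n::nat. real n *\<^sub>R m \<le> e"
  shows "m \<le> 0"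
proof -
  let ?S = "SUP n::nat. real n *\<^sub>R m"
  have bdd: "bdd_above (range (\<lambda>n::nat. real n *\<^sub>R m))"
    using assms by (intro bdd_aboveI2)
  have "real n *\<^sub>R m \<le> ?S - m" for n
    using cSUP_upper[OF UNIV_I bdd, of "Suc n"] by (simp add: algebra_simps le_diff_eq)
  then have "?S \<le> ?S - m" by (intro cSUP_least) auto
  then show ?thesis by (simp add: le_diff_eq)
qed

lemma le_zero_if_le_divideR_Suc:
  fixes m e :: "'a::{ordered_real_vector,conditionally_complete_lattice}"
  assumes "0 \<le> e" "\<And>n::nat. m \<le> e /\<^sub>R real (Suc n)"
  shows "m \<le> 0"
proof (rule le_zero_if_multiples_le)
  fix n :: nat
  show "real n *\<^sub>R m \<le> e"
  proof (cases n)
    case (Suc k)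
    then show ?thesis using assms(2)[of k] by (simp add: pos_le_divideR_eq del: of_nat_Suc)
  qed (simp add: assms(1))
qed

lemma inf_le_scaleR_inf_add_rpos_diff:
  fixes y u e :: "'a::{ordered_real_vector,lattice}"
  assumes "0 \<le> y" "0 \<le> e" "0 \<le> s"
  shows "inf y u \<le> max s 1 *\<^sub>R inf y e + rpos (u - s *\<^sub>R e)"
proof -
  have "u \<le> s *\<^sub>R e + rpos (u - s *\<^sub>R e)"
    using le_rpos[of "u - s *\<^sub>R e"] by (simp add: diff_le_eq add.commute)
  then have "inf y u \<le> inf y (s *\<^sub>R e + rpos (u - s *\<^sub>R e))"
    by (intro inf_mono order_refl)
  also have "\<dots> \<le> inf y (s *\<^sub>R e) + inf y (rpos (u - s *\<^sub>R e))"
    using assms by (intro inf_add_le rpos_nonneg scaleR_nonneg_nonneg)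
  also have "\<dots> \<le> max s 1 *\<^sub>R inf y e + rpos (u - s *\<^sub>R e)"
    using inf_scaleR_le[of s e y] assms by (intro add_mono) (simp_all add: inf_commute)
  finally show ?thesis .
qed

section \<open>Bands and band projections\<close>

lemma inf_rpos_Sup_eq_zero:
  fixes D :: "'a::{ordered_real_vector,conditionally_complete_lattice} set"
  assumes "D \<noteq> {}" "bdd_above D" "0 \<le> v" "\<And>d. d \<in> D \<Longrightarrow> inf (rpos d) v = 0"
  shows "inf (rpos (Sup D)) v = 0"
proof -
  have disjoint_iff: "inf p v = 0 \<longleftrightarrow> p = sup p v - v" for p :: 'a
    using riesz.add_eq_inf_sup[of p v] by (auto simp: eq_diff_eq)
  let ?M = "sup (rpos (Sup D)) v - v"
  have "d \<le> ?M" if "d \<in> D" for d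
  proof -
    have "d \<le> rpos d" by (rule le_rpos)
    also have "\<dots> = sup (rpos d) v - v" using assms(4) that disjoint_iff by blast
    also have "\<dots> \<le> ?M"
      using cSup_upper[OF that assms(2)] by (intro diff_right_mono sup_mono rpos_mono) simp_all
    finally show ?thesis .
  qed
  then have "Sup D \<le> ?M" using assms(1) by (intro cSup_least)
  then have "rpos (Sup D) \<le> ?M" by (simp add: rpos_def)
  then have "rpos (Sup D) + v \<le> sup (rpos (Sup D)) v + 0" by (simp add: le_diff_eq)
  then have "inf (rpos (Sup D)) v \<le> 0"
    by (simp add: riesz.add_eq_inf_sup[of "rpos (Sup D)" v])
  with assms(3) show ?thesis by (simp add: antisym rpos_nonneg)
qed

lemma band_disjoint_set:
  fixes v :: "'a::{ordered_real_vector,conditionally_complete_lattice}"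
  assumes v: "0 \<le> v"
  shows "band {x. inf (rabs x) v = 0}" (is "band ?B")
proof -
  have solid: "x \<in> ?B" if "y \<in> ?B" "rabs x \<le> rabs y" for x y
    using that v inf_eq_zero_mono[OF rabs_nonneg] by blast
  have add: "x + y \<in> ?B" if "x \<in> ?B" "y \<in> ?B" for x y
  proof -
    have "inf v (rabs (x + y)) \<le> inf v (rabs x + rabs y)"
      by (intro inf_mono order_refl rabs_triangle)
    also have "\<dots> \<le> inf v (rabs x) + inf v (rabs y)"
      using v by (intro inf_add_le rabs_nonneg)
    finally show ?thesis
      using that v by (simp add: inf_commute antisym rabs_nonneg)
  qed
  have scale: "c *\<^sub>R x \<in> ?B" if "x \<in> ?B" for c x
  proof -
    have "inf (\<bar>c\<bar> *\<^sub>R rabs x) v \<le> max \<bar>c\<bar> 1 *\<^sub>R inf (rabs x) v"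
      using v by (intro inf_scaleR_le rabs_nonneg) simp
    with that v show ?thesis
      by (simp add: rabs_scaleR antisym rabs_nonneg scaleR_nonneg_nonneg)
  qed
  have Sup: "Sup D \<in> ?B" if D: "D \<subseteq> ?B" "D \<noteq> {}" "bdd_above D" for D
  proof -
    from D obtain d0 where "d0 \<in> D" by blast
    have "rpos (- Sup D) \<le> rabs d0"
      using cSup_upper[OF \<open>d0 \<in> D\<close> D(3)] rpos_mono[of "- Sup D" "- d0"]
        rpos_le_rabs[of "- d0"] rabs_uminus[of d0] by simp
    then have neg: "inf (rpos (- Sup D)) v = 0"
      using D(1) \<open>d0 \<in> D\<close> v by (blast intro: inf_eq_zero_mono rpos_nonneg)
    have pos: "inf (rpos (Sup D)) v = 0"
      using D v by (intro inf_rpos_Sup_eq_zero) (blast intro: inf_eq_zero_mono rpos_nonneg rpos_le_rabs)+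
    have "inf v (rabs (Sup D)) \<le> inf v (rpos (Sup D) + rpos (- Sup D))"
      by (intro inf_mono order_refl rabs_le_rpos_add_rpos_uminus)
    also have "\<dots> \<le> inf v (rpos (Sup D)) + inf v (rpos (- Sup D))"
      using v by (intro inf_add_le rpos_nonneg)
    finally show ?thesis
      using neg pos v by (simp add: inf_commute antisym rabs_nonneg)
  qed
  have "subspace ?B"
    using add scale v by (intro subspaceI) (simp_all add: rabs_of_nonneg inf.absorb1)
  with solid Sup show ?thesis
    unfolding band_def riesz_ideal_def by blast
qed

lemma band_subspace: "band B \<Longrightarrow> subspace B"
  unfolding band_def riesz_ideal_def by blast

lemma band_Sup: "band B \<Longrightarrow> D \<subseteq> B \<Longrightarrow> D \<noteq> {} \<Longrightarrow> bdd_above D \<Longrightarrow> Sup D \<in> B"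
  unfolding band_def by blast

lemma band_Inter:
  assumes "\<And>B. B \<in> \<B> \<Longrightarrow> band B"
  shows "band (\<Inter>\<B>)"
proof -
  have "subspace (\<Inter>\<B>)" using assms band_subspace by (blast intro: subspace_Inter)
  moreover have "x \<in> \<Inter>\<B>" if "y \<in> \<Inter>\<B>" "rabs x \<le> rabs y" for x y
    using that assms unfolding band_def riesz_ideal_def by blast
  moreover have "Sup D \<in> \<Inter>\<B>" if "D \<subseteq> \<Inter>\<B>" "D \<noteq> {}" "bdd_above D" for D
    using that assms unfolding band_def by blast
  ultimately show ?thesis unfolding band_def riesz_ideal_def by blast
qed

lemma band_band_gen: "band (band_gen y)"
  unfolding band_gen_def by (rule band_Inter) simp

lemma band_gen_least: "band B \<Longrightarrow> y \<in> B \<Longrightarrow> band_gen y \<subseteq> B"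
  unfolding band_gen_def by blast

lemma band_disj_compl: "band (disj_compl S)"
proof -
  have "disj_compl S = (\<Inter>s\<in>S. {x. inf (rabs x) (rabs s) = 0})"
    unfolding disj_compl_def by blast
  then show ?thesis
    by (auto intro!: band_Inter band_disjoint_set rabs_nonneg)
qed

lemma band_gen_subset_disjoint_set:
  fixes w v :: "'a::{ordered_real_vector,conditionally_complete_lattice}"
  assumes "0 \<le> w" "0 \<le> v" "inf w v = 0"
  shows "band_gen w \<subseteq> {x. inf (rabs x) v = 0}"
  using assms by (intro band_gen_least band_disjoint_set) (simp_all add: rabs_of_nonneg)

lemma mem_disj_compl_self: "x \<in> S \<Longrightarrow> x \<in> disj_compl S \<Longrightarrow> x = 0"
  unfolding disj_compl_def using rabs_eq_zeroD by force

lemma band_proj_eqI: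
  assumes "b \<in> band_gen y" "x - b \<in> disj_compl (band_gen y)"
  shows "band_proj y x = b"
  unfolding band_proj_def
proof (rule the_equality)
  fix b' assume b': "b' \<in> band_gen y \<and> x - b' \<in> disj_compl (band_gen y)"
  have "b' - b \<in> band_gen y"
    using b' assms(1) by (simp add: subspace_diff[OF band_subspace[OF band_band_gen]])
  moreover have "b' - b \<in> disj_compl (band_gen y)"
    using subspace_diff[OF band_subspace[OF band_disj_compl] assms(2), of "x - b'"] b' by simp
  ultimately show "b' = b" using mem_disj_compl_self by fastforce
qed (use assms in blast)

lemma bdd_above_range_inf: "bdd_above (range (\<lambda>n. inf (f n) (e::'a::lattice)))"
  by (intro bdd_aboveI2[where M = e]) simp

lemma SUP_inf_multiples_mem_band:
  fixes w e :: "'a::{ordered_real_vector,conditionally_complete_lattice}"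
  assumes B: "band B" "w \<in> B" and "0 \<le> w" "0 \<le> e"
  shows "(SUP n::nat. inf (real n *\<^sub>R w) e) \<in> B"
proof -
  have "inf (real n *\<^sub>R w) e \<in> B" for n :: nat
  proof -
    have "real n *\<^sub>R w \<in> B" using subspace_scale[OF band_subspace[OF B(1)] B(2)] .
    moreover have "rabs (inf (real n *\<^sub>R w) e) \<le> rabs (real n *\<^sub>R w)"
      using assms by (simp add: rabs_of_nonneg scaleR_nonneg_nonneg)
    ultimately show ?thesis using B(1) unfolding band_def riesz_ideal_def by blast
  qed
  then show ?thesis
    by (intro band_Sup[OF B(1)] bdd_above_range_inf) auto
qed

lemma SUP_inf_le: "(SUP n::nat. inf (f n) (e::'a::conditionally_complete_lattice)) \<le> e"
  by (rule cSUP_least) simp_all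

lemma inf_diff_SUP_inf_multiples:
  fixes w e :: "'a::{ordered_real_vector,conditionally_complete_lattice}"
  assumes "0 \<le> w" "0 \<le> e"
  shows "inf (e - (SUP n::nat. inf (real n *\<^sub>R w) e)) w = 0"
proof -
  let ?p = "SUP n::nat. inf (real n *\<^sub>R w) e"
  let ?q = "inf (e - ?p) w"
  have le_p: "inf (real n *\<^sub>R w) e \<le> ?p" for n
    by (rule cSUP_upper[OF UNIV_I bdd_above_range_inf])
  have "real n *\<^sub>R ?q \<le> inf (real n *\<^sub>R w) e" for n :: nat
  proof (induction n)
    case 0
    then show ?case using assms by (simp add: inf.absorb1)
  next
    case (Suc n)
    have Suc_scaleR: "real (Suc n) *\<^sub>R z = real n *\<^sub>R z + z" for z :: 'a
      by (simp add: scaleR_left_distrib)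
    have "real (Suc n) *\<^sub>R ?q = real n *\<^sub>R ?q + ?q" by (rule Suc_scaleR)
    also have "\<dots> \<le> inf (real n *\<^sub>R w) e + ?q" using Suc.IH by (rule add_right_mono)
    also have "\<dots> \<le> inf (real (Suc n) *\<^sub>R w) e"
    proof (rule le_infI)
      have "inf (real n *\<^sub>R w) e + ?q \<le> real n *\<^sub>R w + w" by (intro add_mono) simp_all
      then show "inf (real n *\<^sub>R w) e + ?q \<le> real (Suc n) *\<^sub>R w" by (simp only: Suc_scaleR)
      have "inf (real n *\<^sub>R w) e + ?q \<le> ?p + (e - ?p)" by (intro add_mono le_p) simp
      then show "inf (real n *\<^sub>R w) e + ?q \<le> e" by simp
    qed
    finally show ?case .
  qed
  then have "?q \<le> 0" by (intro le_zero_if_multiples_le[of _ e]) (rule order_trans[OF _ inf_le2])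
  moreover have "0 \<le> ?q" using assms SUP_inf_le by simp
  ultimately show ?thesis by simp
qed

lemma band_proj_eq_SUP:
  fixes w e :: "'a::{ordered_real_vector,conditionally_complete_lattice}"
  assumes "0 \<le> w" "0 \<le> e"
  shows "band_proj w e = (SUP n::nat. inf (real n *\<^sub>R w) e)"
proof -
  define p where "p = (SUP n::nat. inf (real n *\<^sub>R w) e)"
  have r: "0 \<le> e - p" using SUP_inf_le by (simp add: p_def)
  have "inf w (e - p) = 0"
    using inf_diff_SUP_inf_multiples[OF assms] unfolding p_def by (simp only: inf_commute)
  then have "band_gen w \<subseteq> {x. inf (rabs x) (e - p) = 0}"
    using assms(1) r by (intro band_gen_subset_disjoint_set)
  then have "e - p \<in> disj_compl (band_gen w)"
    unfolding disj_compl_def by (auto simp: rabs_of_nonneg[OF r] inf_commute)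
  moreover have "p \<in> band_gen w"
    unfolding band_gen_def p_def using assms by (blast intro: SUP_inf_multiples_mem_band)
  ultimately show ?thesis unfolding p_def by (rule band_proj_eqI[rotated])
qed

lemma band_proj_le:
  fixes w e z :: "'a::{ordered_real_vector,conditionally_complete_lattice}"
  assumes "0 \<le> w" "0 \<le> e" "\<And>n::nat. inf (real n *\<^sub>R w) e \<le> z"
  shows "band_proj w e \<le> z"
  using assms by (simp add: band_proj_eq_SUP cSUP_least)

lemma inf_le_band_proj:
  fixes w e :: "'a::{ordered_real_vector,conditionally_complete_lattice}"
  assumes "0 \<le> w" "0 \<le> e"
  shows "inf w e \<le> band_proj w e"
  using assms cSUP_upper[OF UNIV_I bdd_above_range_inf, of "\<lambda>n::nat. real n *\<^sub>R w" 1]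
  by (simp add: band_proj_eq_SUP)

lemma band_proj_nonneg:
  fixes w e :: "'a::{ordered_real_vector,conditionally_complete_lattice}"
  assumes "0 \<le> w" "0 \<le> e"
  shows "0 \<le> band_proj w e"
proof -
  have "0 \<le> inf w e" using assms by simp
  also have "\<dots> \<le> band_proj w e" using assms by (rule inf_le_band_proj)
  finally show ?thesis .
qed

lemma band_proj_rpos_diff_le:
  fixes y e :: "'a::{ordered_real_vector,conditionally_complete_lattice}"
  assumes "0 \<le> y" "0 \<le> e" "0 < \<epsilon>"
  shows "band_proj (rpos (y - \<epsilon> *\<^sub>R e)) e \<le> max (inverse \<epsilon>) 1 *\<^sub>R inf y e"
proof (rule band_proj_le[OF rpos_nonneg assms(2)])
  fix n :: nat
  let ?v = "inf (real n *\<^sub>R rpos (y - \<epsilon> *\<^sub>R e)) e"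
  have "\<epsilon> *\<^sub>R ?v = inf ((\<epsilon> * real n) *\<^sub>R rpos (y - \<epsilon> *\<^sub>R e)) (\<epsilon> *\<^sub>R e)"
    using assms(3) by (simp add: scaleR_inf_distrib)
  also have "\<dots> \<le> y"
    using assms by (intro inf_scaleR_rpos_diff_le) (simp_all add: scaleR_nonneg_nonneg)
  finally have "?v \<le> inverse \<epsilon> *\<^sub>R y" using assms(3) by (simp add: pos_le_divideR_eq)
  then have "?v \<le> inf (inverse \<epsilon> *\<^sub>R y) e" by simp
  also have "\<dots> \<le> max (inverse \<epsilon>) 1 *\<^sub>R inf y e"
    using assms by (intro inf_scaleR_le) simp_all
  finally show "?v \<le> max (inverse \<epsilon>) 1 *\<^sub>R inf y e" .
qed

lemma inf_le_add_band_proj_rpos_diff: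
  fixes y e :: "'a::{ordered_real_vector,conditionally_complete_lattice}"
  assumes "0 \<le> e" "0 \<le> \<epsilon>"
  shows "inf y e \<le> \<epsilon> *\<^sub>R e + band_proj (rpos (y - \<epsilon> *\<^sub>R e)) e"
proof -
  let ?x = "inf y e - \<epsilon> *\<^sub>R e"
  have "?x \<le> e" using assms by (simp add: diff_le_eq add_increasing2 scaleR_nonneg_nonneg)
  then have "rpos ?x \<le> e" using assms(1) by (simp add: rpos_def)
  moreover have "rpos ?x \<le> rpos (y - \<epsilon> *\<^sub>R e)" by (intro rpos_mono diff_right_mono inf_le1)
  ultimately have "rpos ?x \<le> inf (rpos (y - \<epsilon> *\<^sub>R e)) e" by simp
  also have "\<dots> \<le> band_proj (rpos (y - \<epsilon> *\<^sub>R e)) e"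
    using assms(1) by (intro inf_le_band_proj rpos_nonneg)
  finally have "?x \<le> band_proj (rpos (y - \<epsilon> *\<^sub>R e)) e"
    using le_rpos[of ?x] by (rule order_trans[rotated])
  then show ?thesis by (simp add: diff_le_eq add.commute)
qed

lemma weak_order_unit_disjoint_eq_zero:
  assumes "weak_order_unit e" "0 \<le> w" "inf w e = 0"
  shows "w = 0"
proof -
  have "band_gen e \<subseteq> {x. inf (rabs x) w = 0}"
    using assms by (intro band_gen_subset_disjoint_set) (auto simp: weak_order_unit_def inf_commute)
  then have "inf (rabs w) w = 0" using assms(1) by (auto simp: weak_order_unit_def)
  then show "w = 0" using assms(2) by (simp add: rabs_of_nonneg)
qed

lemma weak_order_unit_INF_rpos_diff:
  assumes "weak_order_unit e" "0 \<le> u"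
  shows "(INF n::nat. rpos (u - real n *\<^sub>R e)) = 0"
proof -
  have e: "0 \<le> e" using assms(1) by (simp add: weak_order_unit_def)
  let ?w = "INF n::nat. rpos (u - real n *\<^sub>R e)"
  have bdd: "bdd_below (range (\<lambda>n::nat. rpos (u - real n *\<^sub>R e)))"
    by (intro bdd_belowI2[where m = 0] rpos_nonneg)
  have w: "0 \<le> ?w" by (intro cINF_greatest rpos_nonneg) simp
  have "real n *\<^sub>R inf ?w e \<le> u" for n :: nat
  proof -
    have "real n *\<^sub>R inf ?w e = inf (real n *\<^sub>R ?w) (real n *\<^sub>R e)"
      by (simp add: scaleR_inf_distrib)
    also have "\<dots> \<le> inf (real n *\<^sub>R rpos (u - real n *\<^sub>R e)) (real n *\<^sub>R e)"
      by (intro inf_mono order_refl scaleR_left_mono cINF_lower[OF bdd UNIV_I]) simp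
    also have "\<dots> \<le> u"
      using assms(2) e by (intro inf_scaleR_rpos_diff_le) (simp_all add: scaleR_nonneg_nonneg)
    finally show ?thesis .
  qed
  then have "inf ?w e \<le> 0" by (rule le_zero_if_multiples_le)
  then have "inf ?w e = 0" using w e by (simp add: antisym)
  with assms(1) w show ?thesis by (rule weak_order_unit_disjoint_eq_zero)
qed

section \<open>Order convergence\<close>

definition eventual_bounds :: "('i::preorder \<Rightarrow> 'a::{ordered_real_vector,lattice}) \<Rightarrow> 'a set" where
  "eventual_bounds y = {v. \<exists>a0. \<forall>a. a0 \<le> a \<longrightarrow> rabs (y a) \<le> v}"

lemma eventual_bounds_nonneg:
  assumes "v \<in> eventual_bounds y"
  shows "0 \<le> v"
proof -
  from assms obtain a0 where "\<forall>a. a0 \<le> a \<longrightarrow> rabs (y a) \<le> v"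
    unfolding eventual_bounds_def by blast
  then have "rabs (y a0) \<le> v" by simp
  then show ?thesis by (rule order_trans[OF rabs_nonneg])
qed

lemma oconv_zero_iff_Inf_eventual_bounds:
  fixes y :: "'i::preorder \<Rightarrow> 'a::{ordered_real_vector,conditionally_complete_lattice}"
  assumes "directed_index TYPE('i)"
  shows "oconv y 0 \<longleftrightarrow> eventual_bounds y \<noteq> {} \<and> Inf (eventual_bounds y) = 0"
proof -
  let ?E = "eventual_bounds y"
  have bdd: "bdd_below ?E" by (meson bdd_belowI eventual_bounds_nonneg)
  have Inf_nonneg: "?E \<noteq> {} \<Longrightarrow> 0 \<le> Inf ?E" by (intro cInf_greatest eventual_bounds_nonneg)
  have "down_directed ?E"
    unfolding down_directed_def
  proof (intro ballI)
    fix v1 v2 assume "v1 \<in> ?E" "v2 \<in> ?E"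
    then obtain a1 a2
      where a: "\<forall>a. a1 \<le> a \<longrightarrow> rabs (y a) \<le> v1" "\<forall>a. a2 \<le> a \<longrightarrow> rabs (y a) \<le> v2"
      unfolding eventual_bounds_def by blast
    obtain c where c: "a1 \<le> c" "a2 \<le> c"
      using assms unfolding directed_index_def by blast
    have "rabs (y a) \<le> inf v1 v2" if "c \<le> a" for a
      using a order_trans[OF c(1) that] order_trans[OF c(2) that] by simp
    then have "\<forall>a. c \<le> a \<longrightarrow> rabs (y a) \<le> inf v1 v2" by blast
    then have "inf v1 v2 \<in> ?E" unfolding eventual_bounds_def by blast
    then show "\<exists>c\<in>?E. c \<le> v1 \<and> c \<le> v2" by (intro bexI) simp_all
  qed
  show ?thesis
  proof
    assume "oconv y 0"
    then obtain D
      where D: "D \<noteq> {}" "Inf D = 0" "\<forall>z\<in>D. \<exists>a0. \<forall>a. a0 \<le> a \<longrightarrow> rabs (y a - 0) \<le> z"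
      unfolding oconv_def by blast
    then have sub: "D \<subseteq> ?E" unfolding eventual_bounds_def by auto
    with D(1) have E: "?E \<noteq> {}" by blast
    have "Inf ?E \<le> 0" using cInf_superset_mono[OF D(1) bdd sub] D(2) by simp
    with E Inf_nonneg[OF E] show "?E \<noteq> {} \<and> Inf ?E = 0" by simp
  next
    assume E: "?E \<noteq> {} \<and> Inf ?E = 0"
    have "\<forall>z\<in>?E. 0 \<le> z" using eventual_bounds_nonneg by blast
    moreover have "\<forall>z\<in>?E. \<exists>a0. \<forall>a. a0 \<le> a \<longrightarrow> rabs (y a - 0) \<le> z"
      unfolding eventual_bounds_def by simp
    ultimately show "oconv y 0"
      unfolding oconv_def using E \<open>down_directed ?E\<close> by blast
  qed
qed

lemma eventual_bounds_dominated:
  assumes "z \<in> eventual_bounds g" "\<And>a. rabs (f a) \<le> c *\<^sub>R rabs (g a) + t" "0 \<le> c"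
  shows "c *\<^sub>R z + t \<in> eventual_bounds f"
proof -
  from assms(1) obtain a0 where a0: "\<forall>a. a0 \<le> a \<longrightarrow> rabs (g a) \<le> z"
    unfolding eventual_bounds_def by blast
  have "rabs (f a) \<le> c *\<^sub>R z + t" if "a0 \<le> a" for a
  proof -
    have "rabs (f a) \<le> c *\<^sub>R rabs (g a) + t" by (rule assms(2))
    also have "\<dots> \<le> c *\<^sub>R z + t"
      using a0 that assms(3) by (simp add: scaleR_left_mono)
    finally show ?thesis .
  qed
  then show ?thesis unfolding eventual_bounds_def by blast
qed

lemma oconv_zero_dominated:
  fixes f :: "'i::preorder \<Rightarrow> 'a::{ordered_real_vector,conditionally_complete_lattice}"
    and g :: "'k \<Rightarrow> 'i \<Rightarrow> 'a"
  assumes dir: "directed_index TYPE('i)"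
    and g: "\<And>k. oconv (g k) 0"
    and dom: "\<And>k a. rabs (f a) \<le> c k *\<^sub>R rabs (g k a) + t k"
    and c: "\<And>k. 0 < c k"
    and t: "\<And>m. (\<And>k. m \<le> t k) \<Longrightarrow> m \<le> 0"
  shows "oconv f 0"
proof -
  let ?E = "eventual_bounds f"
  have Eg: "eventual_bounds (g k) \<noteq> {}" "Inf (eventual_bounds (g k)) = 0" for k
    using g oconv_zero_iff_Inf_eventual_bounds[OF dir] by blast+
  have mem: "c k *\<^sub>R z + t k \<in> ?E" if "z \<in> eventual_bounds (g k)" for k z
    using eventual_bounds_dominated[OF that dom] c[of k] by simp
  have E: "?E \<noteq> {}" using mem Eg(1) by blast
  have bdd: "bdd_below ?E" by (meson bdd_belowI eventual_bounds_nonneg)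
  have "Inf ?E \<le> t k" for k
  proof -
    have "(Inf ?E - t k) /\<^sub>R c k \<le> z" if "z \<in> eventual_bounds (g k)" for z
      using cInf_lower[OF mem[OF that] bdd] c[of k] by (simp add: pos_divideR_le_eq diff_le_eq)
    then have "(Inf ?E - t k) /\<^sub>R c k \<le> Inf (eventual_bounds (g k))"
      by (intro cInf_greatest Eg(1))
    then show ?thesis using Eg(2) c[of k] by (simp add: pos_divideR_le_eq)
  qed
  then have "Inf ?E \<le> 0" by (rule t)
  moreover have "0 \<le> Inf ?E" using E by (intro cInf_greatest eventual_bounds_nonneg)
  ultimately show ?thesis using E by (simp add: oconv_zero_iff_Inf_eventual_bounds[OF dir])
qed

lemma down_directed_range_antimono:
  fixes f :: "nat \<Rightarrow> 'a::order"
  assumes "antimono f"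
  shows "down_directed (range f)"
  unfolding down_directed_def
  by (metis antimonoD assms max.cobounded1 max.cobounded2 rangeE rangeI)

section \<open>Conditional expectations and convergence in conditional probability\<close>

lemma linear_mono_nonneg: "linear T \<Longrightarrow> mono T \<Longrightarrow> 0 \<le> x \<Longrightarrow> 0 \<le> T x"
  using monoD[of T 0 x] by (simp add: linear_0)

lemma cond_exp_op_mono:
  assumes "cond_exp_op T e"
  shows "mono T"
proof (rule monoI)
  fix x y :: 'a assume "x \<le> y"
  with assms have "0 \<le> T (y - x)"
    unfolding cond_exp_op_def strictly_positive_def by simp
  with assms show "T x \<le> T y"
    unfolding cond_exp_op_def by (simp add: linear_diff)
qed

lemma order_continuousD:
  assumes "order_continuous T" "D \<noteq> {}" "down_directed D" "\<And>z. z \<in> D \<Longrightarrow> 0 \<le> z" "Inf D = 0"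
  shows "Inf (T ` D) = 0"
  using assms unfolding order_continuous_def by blast

lemma oconv_inf_if_oconv_inf_unit:
  fixes T :: "'a::{ordered_real_vector,conditionally_complete_lattice} \<Rightarrow> 'a"
    and y :: "'i::preorder \<Rightarrow> 'a"
  assumes e: "weak_order_unit e"
    and T: "linear T" "mono T" "order_continuous T"
    and dir: "directed_index TYPE('i)"
    and y: "\<And>a. 0 \<le> y a"
    and conv: "oconv (\<lambda>a. T (inf (y a) e)) 0"
    and u: "0 \<le> u"
  shows "oconv (\<lambda>a. T (inf (y a) u)) 0"
proof -
  have e0: "0 \<le> e" using e by (simp add: weak_order_unit_def)
  let ?r = "\<lambda>n::nat. rpos (u - real n *\<^sub>R e)"
  have dom: "rabs (T (inf (y a) u)) \<le> max (real n) 1 *\<^sub>R rabs (T (inf (y a) e)) + T (?r n)"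
    for a n
  proof -
    have "T (inf (y a) u) \<le> T (max (real n) 1 *\<^sub>R inf (y a) e + ?r n)"
      using y e0 by (intro monoD[OF T(2)] inf_le_scaleR_inf_add_rpos_diff) simp_all
    then show ?thesis
      using T y e0 u by (simp add: rabs_of_nonneg linear_mono_nonneg linear_add linear_cmul)
  qed
  have "antimono ?r"
    using e0 by (intro antimonoI rpos_mono diff_left_mono scaleR_right_mono) simp_all
  then have Inf_T: "Inf (T ` range ?r) = 0"
    using weak_order_unit_INF_rpos_diff[OF e u]
    by (intro order_continuousD[OF T(3)] down_directed_range_antimono) (auto simp: rpos_nonneg)
  have t: "m \<le> 0" if "\<And>n. m \<le> T (?r n)" for m
  proof -
    have "m \<le> Inf (T ` range ?r)" using that by (intro cInf_greatest) auto
    with Inf_T show ?thesis by simp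
  qed
  show ?thesis
    using conv by (intro oconv_zero_dominated[OF dir _ dom _ t]) simp_all
qed

lemma oconv_band_proj_if_oconv_inf_unit:
  fixes T :: "'a::{ordered_real_vector,conditionally_complete_lattice} \<Rightarrow> 'a"
    and y :: "'i::preorder \<Rightarrow> 'a"
  assumes e: "0 \<le> e"
    and T: "linear T" "mono T"
    and dir: "directed_index TYPE('i)"
    and y: "\<And>a. 0 \<le> y a"
    and conv: "oconv (\<lambda>a. T (inf (y a) e)) 0"
    and \<epsilon>: "0 < \<epsilon>"
  shows "oconv (\<lambda>a. T (band_proj (rpos (y a - \<epsilon> *\<^sub>R e)) e)) 0"
proof -
  have dom: "rabs (T (band_proj (rpos (y a - \<epsilon> *\<^sub>R e)) e))
      \<le> max (inverse \<epsilon>) 1 *\<^sub>R rabs (T (inf (y a) e)) + 0" for a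
  proof -
    have "T (band_proj (rpos (y a - \<epsilon> *\<^sub>R e)) e) \<le> T (max (inverse \<epsilon>) 1 *\<^sub>R inf (y a) e)"
      using y e \<epsilon> by (intro monoD[OF T(2)] band_proj_rpos_diff_le)
    then show ?thesis
      using T y e
      by (simp add: rabs_of_nonneg linear_mono_nonneg linear_cmul band_proj_nonneg rpos_nonneg)
  qed
  show ?thesis
    using conv by (intro oconv_zero_dominated[OF dir _ dom, where 'k = unit]) simp_all
qed

lemma oconv_inf_unit_if_oconv_band_proj:
  fixes T :: "'a::{ordered_real_vector,conditionally_complete_lattice} \<Rightarrow> 'a"
    and y :: "'i::preorder \<Rightarrow> 'a"
  assumes e: "0 \<le> e"
    and T: "linear T" "mono T" "T e = e"
    and dir: "directed_index TYPE('i)"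
    and y: "\<And>a. 0 \<le> y a"
    and conv: "\<And>\<epsilon>. 0 < \<epsilon> \<Longrightarrow> oconv (\<lambda>a. T (band_proj (rpos (y a - \<epsilon> *\<^sub>R e)) e)) 0"
  shows "oconv (\<lambda>a. T (inf (y a) e)) 0"
proof -
  let ?\<epsilon> = "\<lambda>k::nat. inverse (real (Suc k))"
  have dom: "rabs (T (inf (y a) e))
      \<le> 1 *\<^sub>R rabs (T (band_proj (rpos (y a - ?\<epsilon> k *\<^sub>R e)) e)) + e /\<^sub>R real (Suc k)" for a k
  proof -
    have "T (inf (y a) e) \<le> T (?\<epsilon> k *\<^sub>R e + band_proj (rpos (y a - ?\<epsilon> k *\<^sub>R e)) e)"
      using e by (intro monoD[OF T(2)] inf_le_add_band_proj_rpos_diff) simp_all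
    then show ?thesis
      using T y e
      by (simp add: rabs_of_nonneg linear_mono_nonneg linear_add linear_cmul band_proj_nonneg
          rpos_nonneg add.commute)
  qed
  have g: "oconv (\<lambda>a. T (band_proj (rpos (y a - ?\<epsilon> k *\<^sub>R e)) e)) 0" for k
    by (rule conv) simp
  show ?thesis
    by (rule oconv_zero_dominated[OF dir g dom _ le_zero_if_le_divideR_Suc[OF e]]) simp
qed

theorem mainTheorem9:
  fixes T :: "'a::{ordered_real_vector,conditionally_complete_lattice} \<Rightarrow> 'a"
    and e :: 'a
    and xn :: "'i::preorder \<Rightarrow> 'a"
    and x :: 'a
  assumes "weak_order_unit e"
    and "cond_exp_op T e"
    and "T e = e"
    and "directed_index TYPE('i)"
  shows "((\<forall>\<epsilon>>0. oconv (\<lambda>a. T (band_proj (rpos (rabs (xn a - x) - \<epsilon> *\<^sub>R e)) e)) 0)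
           \<longleftrightarrow> (\<forall>u. 0 \<le> u \<longrightarrow> oconv (\<lambda>a. T (inf (rabs (xn a - x)) u)) 0))
       \<and> ((\<forall>u. 0 \<le> u \<longrightarrow> oconv (\<lambda>a. T (inf (rabs (xn a - x)) u)) 0)
           \<longleftrightarrow> oconv (\<lambda>a. T (inf (rabs (xn a - x)) e)) 0)"
proof -
  have e: "0 \<le> e" using assms(1) by (simp add: weak_order_unit_def)
  have T: "linear T" "mono T" "order_continuous T"
    using assms(2) cond_exp_op_mono by (auto simp: cond_exp_op_def)
  let ?y = "\<lambda>a. rabs (xn a - x)"
  note ii_of_iii = oconv_inf_if_oconv_inf_unit[where y = ?y, OF assms(1) T assms(4) rabs_nonneg]
  note i_of_iii = oconv_band_proj_if_oconv_inf_unit[where y = ?y, OF e T(1,2) assms(4) rabs_nonneg]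
  note iii_of_i = oconv_inf_unit_if_oconv_band_proj[where y = ?y, OF e T(1,2) assms(3,4) rabs_nonneg]
  let ?i = "\<forall>\<epsilon>>0. oconv (\<lambda>a. T (band_proj (rpos (rabs (xn a - x) - \<epsilon> *\<^sub>R e)) e)) 0"
  let ?ii = "\<forall>u. 0 \<le> u \<longrightarrow> oconv (\<lambda>a. T (inf (rabs (xn a - x)) u)) 0"
  let ?iii = "oconv (\<lambda>a. T (inf (rabs (xn a - x)) e)) 0"
  have "?ii \<longleftrightarrow> ?iii" using ii_of_iii e by blast
  moreover have "?i \<longleftrightarrow> ?iii" using i_of_iii iii_of_i by blast
  ultimately show ?thesis by blast
qed

end
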